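(* Let $d\ge3$ be an integer and $\nu>0$. Let $(\hat Z_t)_{t\ge0}$ be the continuous-time Markov chain on $\mathbb N_0\cup\{\dagger\}$ with transition rates $\hat r(i,i+1)=2\frac{d-1}{d}$ for $i\ge1$, $\hat r(i,i-1)=\frac2d$ for $i\ge1$, $\hat r(0,1)=2$, $\hat r(i,\dagger)=\nu i$ for $i\in\mathbb N_0$, and all other rates zero (so $\dagger$ is absorbing). Define the collision local time $$R_{d,\nu}(i)=\mathsf E\Big[\int_0^\infty\mathbf 1_{\{\hat Z_t=0\}}\,{\rm d}t\ \Big|\ \hat Z_0=i\Big].$$ Then $R_{d,\nu}(0)=\dfrac{1}{2\vartheta_{d,\nu}}$.
   Context: $\beta_d=\sqrt{d-1}$, $\rho_d=2\sqrt{d-1}/d$; $\Delta_{d,\nu}$ is the continued fraction $\Delta_{d,\nu}=\cfrac{1}{a_1-\cfrac{1}{a_2-\cfrac{1}{a_3-\cdots}}}$ with $a_i=\frac{2+i\nu}{\rho_d}$; and $\vartheta_{d,\nu}=1-\Delta_{d,\nu}/\beta_d$. (The chain $\hat Z$ models the distance of two independent rate-1 random walks on the infinite $d$-regular tree whose connecting path's edges each disappear at rate $\nu$, $\dagger$ representing disconnection.) *)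

theory Defs
  imports "HOL-Analysis.Analysis"
begin

definition beta_d :: "nat \<Rightarrow> real" where
  "beta_d d = sqrt (real d - 1)"

definition rho_d :: "nat \<Rightarrow> real" where
  "rho_d d = 2 * sqrt (real d - 1) / real d"

fun cf_trunc :: "(nat \<Rightarrow> real) \<Rightarrow> nat \<Rightarrow> nat \<Rightarrow> real" where
  "cf_trunc a k 0 = 0"
| "cf_trunc a k (Suc n) = 1 / (a k - cf_trunc a (Suc k) n)"

definition Delta :: "nat \<Rightarrow> real \<Rightarrow> real" where
  "Delta d \<nu> = lim (\<lambda>n. cf_trunc (\<lambda>i. (2 + real i * \<nu>) / rho_d d) 1 n)"

definition vartheta :: "nat \<Rightarrow> real \<Rightarrow> real" where
  "vartheta d \<nu> = 1 - Delta d \<nu> / beta_d d"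

definition exit_rate :: "('s \<Rightarrow> 's \<Rightarrow> real) \<Rightarrow> 's \<Rightarrow> real" where
  "exit_rate q x = enn2real (\<integral>\<^sup>+ z. ennreal (q x z) \<partial>count_space (UNIV - {x}))"

text \<open>Iterates of the backward Kolmogorov integral equation (Feller's construction);
  P_iter q n t x y is the probability to be at y at time t, started at x,
  having made at most n jumps.\<close>
fun P_iter :: "('s \<Rightarrow> 's \<Rightarrow> real) \<Rightarrow> nat \<Rightarrow> real \<Rightarrow> 's \<Rightarrow> 's \<Rightarrow> ennreal" where
  "P_iter q 0 t x y = (if x = y then ennreal (exp (- exit_rate q x * t)) else 0)"
| "P_iter q (Suc n) t x y =
     (if x = y then ennreal (exp (- exit_rate q x * t)) else 0)
     + (\<integral>\<^sup>+ s \<in> {0..t}. ennreal (exp (- exit_rate q x * s)) *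
          (\<integral>\<^sup>+ z. ennreal (q x z) * P_iter q n (t - s) z y \<partial>count_space (UNIV - {x}))
        \<partial>lborel)"

definition P_min :: "('s \<Rightarrow> 's \<Rightarrow> real) \<Rightarrow> real \<Rightarrow> 's \<Rightarrow> 's \<Rightarrow> ennreal" where
  "P_min q t x y = (SUP n. P_iter q n t x y)"

text \<open>Expected occupation time of y: E_x[ int_0^oo 1{Z_t = y} dt ] = int_0^oo P_t(x,y) dt.\<close>
definition occupation :: "('s \<Rightarrow> 's \<Rightarrow> real) \<Rightarrow> 's \<Rightarrow> 's \<Rightarrow> ennreal" where
  "occupation q x y = (\<integral>\<^sup>+ t \<in> {0..}. P_min q t x y \<partial>lborel)"

text \<open>States: Some i is i \<in> N_0, None is the cemetery dagger.\<close>
definition Zrate :: "nat \<Rightarrow> real \<Rightarrow> nat option \<Rightarrow> nat option \<Rightarrow> real" where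
  "Zrate d \<nu> x y =
     (case x of
        None \<Rightarrow> 0
      | Some i \<Rightarrow>
          (case y of
             None \<Rightarrow> \<nu> * real i
           | Some j \<Rightarrow>
               (if i = 0 \<and> j = 1 then 2
                else if i \<ge> 1 \<and> j = i + 1 then 2 * (real d - 1) / real d
                else if i \<ge> 1 \<and> j + 1 = i then 2 / real d
                else 0)))"

definition R_dnu :: "nat \<Rightarrow> real \<Rightarrow> nat \<Rightarrow> ennreal" where
  "R_dnu d \<nu> i = occupation (Zrate d \<nu>) (Some i) (Some 0)"

end

theory Submission
  imports Defs
begin

(* Decomposing at the first jump, the occupation times R(i) = R_{d,nu}(i) form the minimal
   nonnegative solution of (2 + i nu) R(i) = [i = 0] + up(i) R(i+1) + down(i) R(i-1), where up and
   down are the rates to i+1 and i-1.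
   Writing Delta_k for the tail of the continued fraction starting at a_k, so that
   Delta_k = 1 / (a_k - Delta_(k+1)), the product h(i) = h(0) prod_{k=1..i} Delta_k / beta solves
   the same system exactly when h(0) = 1/(2 theta), and it decays geometrically in i.
   Minimality gives R <= h. Conversely h - R is a nonnegative subsolution of the homogeneous
   system; for d > 1 this forces it to be nondecreasing in i, and since it is dominated by h,
   which tends to 0, it vanishes. *)

section \<open>Occupation times of the minimal chain\<close>

lemma borel_measurable_convolution_halfline:
  fixes f K :: "real \<Rightarrow> ennreal"
  assumes [measurable]: "f \<in> borel_measurable borel" "K \<in> borel_measurable borel"
  shows "(\<lambda>t. \<integral>\<^sup>+ s \<in> {0..t}. f s * K (t - s) \<partial>lborel) \<in> borel_measurable borel"
proof -
  have "(\<lambda>(t, s). f s * K (t - s) * indicator {0..t} s) \<in> borel_measurable (borel \<Otimes>\<^sub>M lborel)"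
    unfolding split_beta' indicator_def of_bool_def atLeastAtMost_iff by measurable
  then show ?thesis
    by (rule lborel.borel_measurable_nn_integral)
qed

lemma P_iter_measurable[measurable]:
  fixes q :: "'s::countable \<Rightarrow> 's \<Rightarrow> real"
  shows "(\<lambda>t. P_iter q n t x y) \<in> borel_measurable borel"
proof (induction n arbitrary: x y)
  case 0
  then show ?case by simp
next
  case (Suc n)
  define K where "K x \<tau> = (\<integral>\<^sup>+ z. ennreal (q x z) * P_iter q n \<tau> z y \<partial>count_space (UNIV - {x}))" for x \<tau>
  have K_measurable[measurable]: "K x \<in> borel_measurable borel" for x
  proof -
    interpret sigma_finite_measure "count_space (UNIV - {x})"
      by (rule sigma_finite_measure_count_space_countable) simp
    have "(\<lambda>(z, \<tau>). ennreal (q x z) * P_iter q n \<tau> z y) \<in> borel_measurable (count_space (UNIV - {x}) \<Otimes>\<^sub>M borel)"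
      by (rule measurable_pair_measure_countable1) (auto intro!: borel_measurable_times_ennreal Suc.IH)
    then have "(\<lambda>(\<tau>, z). ennreal (q x z) * P_iter q n \<tau> z y) \<in> borel_measurable (borel \<Otimes>\<^sub>M count_space (UNIV - {x}))"
      by (subst measurable_pair_swap_iff) (simp add: case_prod_beta)
    then show ?thesis unfolding K_def by (rule borel_measurable_nn_integral)
  qed
  have "(\<lambda>t. \<integral>\<^sup>+ s \<in> {0..t}. ennreal (exp (- exit_rate q x * s)) * K x (t - s) \<partial>lborel) \<in> borel_measurable borel"
    by (rule borel_measurable_convolution_halfline) measurable
  then show ?case
    by (simp add: K_def)
qed

lemma P_iter_le_Suc: "P_iter q n t x y \<le> P_iter q (Suc n) t x y"
proof (induction n arbitrary: t x y)
  case 0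
  then show ?case by simp
next
  case (Suc n)
  show ?case
    unfolding P_iter.simps(2)[of q "Suc n" t x y] P_iter.simps(2)[of q n t x y]
    by (intro add_mono order_refl nn_integral_mono mult_left_mono mult_right_mono Suc.IH) auto
qed

lemma nn_integral_exp_neg_halfline:
  assumes "a > 0"
  shows "(\<integral>\<^sup>+ s \<in> {0..}. ennreal (exp (- a * s)) \<partial>lborel) = ennreal (1 / a)"
  using nn_integral_has_integral_lebesgue'[OF _ has_integral_exp_minus_to_infinity[OF assms, of 0]]
  by simp

lemma nn_integral_translate_halfline:
  fixes K :: "real \<Rightarrow> ennreal"
  assumes [measurable]: "K \<in> borel_measurable borel"
  shows "(\<integral>\<^sup>+ t \<in> {s..}. K (t - s) \<partial>lborel) = (\<integral>\<^sup>+ \<tau> \<in> {0..}. K \<tau> \<partial>lborel)"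
proof -
  have "(\<integral>\<^sup>+ t \<in> {s..}. K (t - s) \<partial>lborel) = ennreal \<bar>1\<bar> * (\<integral>\<^sup>+ \<tau>. K (s + 1 * \<tau> - s) * indicator {s..} (s + 1 * \<tau>) \<partial>lborel)"
    by (rule nn_integral_real_affine) (unfold indicator_def of_bool_def atLeastAtMost_iff atLeast_iff, measurable)
  then show ?thesis
    by (simp add: indicator_def)
qed

lemma nn_integral_convolution_halfline:
  fixes f K :: "real \<Rightarrow> ennreal"
  assumes [measurable]: "f \<in> borel_measurable borel" "K \<in> borel_measurable borel"
  shows "(\<integral>\<^sup>+ t \<in> {0..}. (\<integral>\<^sup>+ s \<in> {0..t}. f s * K (t - s) \<partial>lborel) \<partial>lborel)
    = (\<integral>\<^sup>+ s \<in> {0..}. f s \<partial>lborel) * (\<integral>\<^sup>+ \<tau> \<in> {0..}. K \<tau> \<partial>lborel)"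
proof -
  have "(\<integral>\<^sup>+ t \<in> {0..}. (\<integral>\<^sup>+ s \<in> {0..t}. f s * K (t - s) \<partial>lborel) \<partial>lborel)
      = (\<integral>\<^sup>+ t. (\<integral>\<^sup>+ s. f s * K (t - s) * indicator {0..t} s * indicator {0..} t \<partial>lborel) \<partial>lborel)"
    by (intro nn_integral_cong nn_integral_multc[symmetric]) (simp add: indicator_def)
  also have "\<dots> = (\<integral>\<^sup>+ s. (\<integral>\<^sup>+ t. f s * K (t - s) * indicator {0..t} s * indicator {0..} t \<partial>lborel) \<partial>lborel)"
    by (rule lborel_pair.Fubini'[symmetric]) (unfold indicator_def of_bool_def atLeastAtMost_iff atLeast_iff, measurable)
  also have "\<dots> = (\<integral>\<^sup>+ s. f s * indicator {0..} s * (\<integral>\<^sup>+ t \<in> {s..}. K (t - s) \<partial>lborel) \<partial>lborel)"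
  proof (intro nn_integral_cong)
    fix s :: real
    have "(\<integral>\<^sup>+ t. f s * K (t - s) * indicator {0..t} s * indicator {0..} t \<partial>lborel)
        = (\<integral>\<^sup>+ t. (f s * indicator {0..} s) * (K (t - s) * indicator {s..} t) \<partial>lborel)"
      by (intro nn_integral_cong) (auto simp: indicator_def)
    also have "\<dots> = f s * indicator {0..} s * (\<integral>\<^sup>+ t \<in> {s..}. K (t - s) \<partial>lborel)"
      by (rule nn_integral_cmult) (unfold indicator_def of_bool_def atLeastAtMost_iff atLeast_iff, measurable)
    finally show "(\<integral>\<^sup>+ t. f s * K (t - s) * indicator {0..t} s * indicator {0..} t \<partial>lborel)
        = f s * indicator {0..} s * (\<integral>\<^sup>+ t \<in> {s..}. K (t - s) \<partial>lborel)" .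
  qed
  also have "\<dots> = (\<integral>\<^sup>+ s \<in> {0..}. f s \<partial>lborel) * (\<integral>\<^sup>+ \<tau> \<in> {0..}. K \<tau> \<partial>lborel)"
    by (simp add: nn_integral_translate_halfline nn_integral_multc)
  finally show ?thesis .
qed

definition occupation_iter :: "('s \<Rightarrow> 's \<Rightarrow> real) \<Rightarrow> nat \<Rightarrow> 's \<Rightarrow> 's \<Rightarrow> ennreal" where
  "occupation_iter q n x y = (\<integral>\<^sup>+ t \<in> {0..}. P_iter q n t x y \<partial>lborel)"

definition first_jump :: "('s \<Rightarrow> 's \<Rightarrow> real) \<Rightarrow> 's \<Rightarrow> ('s \<Rightarrow> ennreal) \<Rightarrow> 's \<Rightarrow> ennreal" where
  "first_jump q y g x = ennreal (1 / exit_rate q x) *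
     (of_bool (x = y) + (\<integral>\<^sup>+ z. ennreal (q x z) * g z \<partial>count_space (UNIV - {x})))"

lemma incseq_occupation_iter: "incseq (\<lambda>n. occupation_iter q n x y)"
  unfolding occupation_iter_def
  by (rule incseq_SucI, rule nn_integral_mono, rule mult_right_mono[OF P_iter_le_Suc]) simp

lemma occupation_eq_SUP_occupation_iter:
  fixes q :: "'s::countable \<Rightarrow> 's \<Rightarrow> real"
  shows "occupation q x y = (SUP n. occupation_iter q n x y)"
proof -
  have "occupation q x y = (\<integral>\<^sup>+ t. (SUP n. P_iter q n t x y * indicator {0..} t) \<partial>lborel)"
    unfolding occupation_def P_min_def by (simp add: SUP_mult_right_ennreal)
  also have "\<dots> = (SUP n. occupation_iter q n x y)"
    unfolding occupation_iter_def
    by (intro nn_integral_monotone_convergence_SUP incseq_SucI le_funI mult_right_mono P_iter_le_Suc) simp_all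
  finally show ?thesis .
qed

lemma occupation_iter_0:
  assumes "exit_rate q x > 0"
  shows "occupation_iter q 0 x y = first_jump q y (\<lambda>_. 0) x"
  using nn_integral_exp_neg_halfline[OF assms]
  unfolding occupation_iter_def first_jump_def by (cases "x = y") auto

lemma P_iter_jump_measurable[measurable]:
  fixes q :: "'s::countable \<Rightarrow> 's \<Rightarrow> real"
  shows "(\<lambda>(\<tau>, z). ennreal (q x z) * P_iter q n \<tau> z y) \<in> borel_measurable (lborel \<Otimes>\<^sub>M count_space S)"
proof -
  have "(\<lambda>(z, \<tau>). ennreal (q x z) * P_iter q n \<tau> z y) \<in> borel_measurable (count_space S \<Otimes>\<^sub>M lborel)"
    by (rule measurable_pair_measure_countable1) auto
  then show ?thesis
    by (subst measurable_pair_swap_iff) (simp add: case_prod_beta)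
qed

lemma nn_integral_occupation_iter_jump:
  fixes q :: "'s::countable \<Rightarrow> 's \<Rightarrow> real"
  shows "(\<integral>\<^sup>+ \<tau> \<in> {0..}. (\<integral>\<^sup>+ z. ennreal (q x z) * P_iter q n \<tau> z y \<partial>count_space S) \<partial>lborel)
    = (\<integral>\<^sup>+ z. ennreal (q x z) * occupation_iter q n z y \<partial>count_space S)"
proof -
  interpret S: sigma_finite_measure "count_space S"
    by (rule sigma_finite_measure_count_space_countable) simp
  interpret pair_sigma_finite lborel "count_space S" ..
  have "(\<integral>\<^sup>+ \<tau> \<in> {0..}. (\<integral>\<^sup>+ z. ennreal (q x z) * P_iter q n \<tau> z y \<partial>count_space S) \<partial>lborel) =
      (\<integral>\<^sup>+ \<tau>. (\<integral>\<^sup>+ z. ennreal (q x z) * P_iter q n \<tau> z y * indicator {0..} \<tau> \<partial>count_space S) \<partial>lborel)"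
    by (intro nn_integral_cong nn_integral_multc[symmetric]) auto
  also have "\<dots> = (\<integral>\<^sup>+ z. (\<integral>\<^sup>+ \<tau>. ennreal (q x z) * P_iter q n \<tau> z y * indicator {0..} \<tau> \<partial>lborel) \<partial>count_space S)"
    by (rule Fubini'[symmetric]) measurable
  finally show ?thesis
    unfolding occupation_iter_def by (simp add: nn_integral_cmult[symmetric] mult.assoc)
qed

lemma occupation_iter_Suc:
  fixes q :: "'s::countable \<Rightarrow> 's \<Rightarrow> real"
  assumes a: "exit_rate q x > 0"
  shows "occupation_iter q (Suc n) x y = first_jump q y (\<lambda>z. occupation_iter q n z y) x"
proof -
  define a where "a = exit_rate q x"
  define K where "K \<tau> = (\<integral>\<^sup>+ z. ennreal (q x z) * P_iter q n \<tau> z y \<partial>count_space (UNIV - {x}))" for \<tau>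
  interpret sigma_finite_measure "count_space (UNIV - {x})"
    by (rule sigma_finite_measure_count_space_countable) simp
  have K_measurable[measurable]: "K \<in> borel_measurable borel"
    unfolding K_def using borel_measurable_nn_integral[OF P_iter_jump_measurable] by simp
  have E: "(\<integral>\<^sup>+ s \<in> {0..}. ennreal (exp (- a * s)) \<partial>lborel) = ennreal (1 / a)"
    using a unfolding a_def by (rule nn_integral_exp_neg_halfline)
  have "occupation_iter q (Suc n) x y =
      (\<integral>\<^sup>+ t \<in> {0..}. of_bool (x = y) * ennreal (exp (- a * t)) \<partial>lborel)
      + (\<integral>\<^sup>+ t \<in> {0..}. (\<integral>\<^sup>+ s \<in> {0..t}. ennreal (exp (- a * s)) * K (t - s) \<partial>lborel) \<partial>lborel)"
    unfolding occupation_iter_def P_iter.simps a_def[symmetric] K_def[symmetric]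
    using borel_measurable_convolution_halfline[of "\<lambda>s. ennreal (exp (- a * s))" K]
    by (subst nn_integral_add[symmetric]) (auto simp: distrib_right)
  also have "(\<integral>\<^sup>+ t \<in> {0..}. of_bool (x = y) * ennreal (exp (- a * t)) \<partial>lborel) = of_bool (x = y) * ennreal (1 / a)"
    by (simp only: mult.assoc, subst nn_integral_cmult, measurable, simp only: E)
  also have "(\<integral>\<^sup>+ t \<in> {0..}. (\<integral>\<^sup>+ s \<in> {0..t}. ennreal (exp (- a * s)) * K (t - s) \<partial>lborel) \<partial>lborel)
      = ennreal (1 / a) * (\<integral>\<^sup>+ z. ennreal (q x z) * occupation_iter q n z y \<partial>count_space (UNIV - {x}))"
    by (subst nn_integral_convolution_halfline) (measurable, simp only: E K_def nn_integral_occupation_iter_jump)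
  finally show ?thesis
    unfolding first_jump_def a_def by (simp add: distrib_left mult.commute)
qed

lemma first_jump_mono:
  assumes "\<And>z. g z \<le> h z"
  shows "first_jump q y g x \<le> first_jump q y h x"
  unfolding first_jump_def by (intro add_mono mult_left_mono nn_integral_mono assms order_refl) auto

lemma first_jump_SUP:
  assumes "incseq g"
  shows "first_jump q y (\<lambda>z. SUP n. g n z) x = (SUP n. first_jump q y (g n) x)"
proof -
  have "(\<integral>\<^sup>+ z. ennreal (q x z) * (SUP n. g n z) \<partial>count_space (UNIV - {x}))
      = (SUP n. \<integral>\<^sup>+ z. ennreal (q x z) * g n z \<partial>count_space (UNIV - {x}))"
    unfolding SUP_mult_left_ennreal
    using assms by (intro nn_integral_monotone_convergence_SUP) (auto simp: incseq_def le_fun_def mult_left_mono)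
  then show ?thesis
    unfolding first_jump_def by (simp add: ennreal_SUP_add_right SUP_mult_left_ennreal)
qed

lemma occupation_first_jump:
  fixes q :: "'s::countable \<Rightarrow> 's \<Rightarrow> real"
  assumes "exit_rate q x > 0"
  shows "occupation q x y = first_jump q y (\<lambda>z. occupation q z y) x"
proof -
  have "occupation_iter q n x y \<le> occupation_iter q (Suc n) x y" for n
    using incseq_SucD[OF incseq_occupation_iter] .
  then have "occupation q x y = (SUP n. occupation_iter q (Suc n) x y)"
    unfolding occupation_eq_SUP_occupation_iter by (intro antisym SUP_mono) blast+
  also have "\<dots> = first_jump q y (\<lambda>z. occupation q z y) x"
    unfolding occupation_iter_Suc[OF assms] occupation_eq_SUP_occupation_iter
    by (rule first_jump_SUP[symmetric]) (simp add: incseq_def le_fun_def incseq_occupation_iter[unfolded incseq_def])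
  finally show ?thesis .
qed

text \<open>At a state with exit rate 0 the first-jump operator degenerates (there 1 / 0 = 0), so such
  states need the separate bound \<open>absorbing\<close>.\<close>
lemma occupation_le_supersolution:
  fixes q :: "'s::countable \<Rightarrow> 's \<Rightarrow> real"
  assumes super: "\<And>x. exit_rate q x > 0 \<Longrightarrow> first_jump q y g x \<le> g x"
    and absorbing: "\<And>x. exit_rate q x = 0 \<Longrightarrow> occupation q x y \<le> g x"
  shows "occupation q x y \<le> g x"
proof -
  have step: "first_jump q y h x \<le> g x" if "\<And>z. h z \<le> g z" "exit_rate q x > 0" for h x
    using first_jump_mono[OF that(1)] super[OF that(2)] by (rule order_trans)
  have absorbing_iter: "occupation_iter q n x y \<le> g x" if "\<not> exit_rate q x > 0" for n x
  proof -
    have "exit_rate q x = 0"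
      using that unfolding exit_rate_def by (simp add: less_le)
    have "occupation_iter q n x y \<le> occupation q x y"
      unfolding occupation_eq_SUP_occupation_iter by (rule SUP_upper) simp
    then show ?thesis using absorbing[OF \<open>exit_rate q x = 0\<close>] by (rule order_trans)
  qed
  have "occupation_iter q n x y \<le> g x" for n x
  proof (induction n arbitrary: x)
    case 0
    show ?case
    proof (cases "exit_rate q x > 0")
      case True
      show ?thesis unfolding occupation_iter_0[OF True] by (rule step) (simp_all add: True)
    qed (rule absorbing_iter)
  next
    case (Suc n)
    show ?case
    proof (cases "exit_rate q x > 0")
      case True
      show ?thesis unfolding occupation_iter_Suc[OF True] by (rule step[OF Suc.IH True])
    qed (rule absorbing_iter)
  qed
  then show ?thesis
    unfolding occupation_eq_SUP_occupation_iter by (rule SUP_least)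
qed

section \<open>The first-jump equations of the chain hat Z\<close>

definition up_rate :: "nat \<Rightarrow> nat \<Rightarrow> real" where
  "up_rate d i = (if i = 0 then 2 else 2 * (real d - 1) / real d)"

definition down_rate :: "nat \<Rightarrow> nat \<Rightarrow> real" where
  "down_rate d i = (if i = 0 then 0 else 2 / real d)"

lemma nn_integral_Zrate:
  "(\<integral>\<^sup>+ z. ennreal (Zrate d \<nu> (Some i) z) * G z \<partial>count_space (UNIV - {Some i}))
    = ennreal (\<nu> * real i) * G None + ennreal (up_rate d i) * G (Some (Suc i))
      + ennreal (down_rate d i) * G (Some (i - 1))"
proof (cases i)
  case 0
  have "(\<integral>\<^sup>+ z. ennreal (Zrate d \<nu> (Some i) z) * G z \<partial>count_space (UNIV - {Some i}))
     = (\<Sum>z\<in>{None, Some 1}. ennreal (Zrate d \<nu> (Some i) z) * G z)"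
    by (rule nn_integral_count_space') (auto simp: Zrate_def 0 split: option.splits)
  then show ?thesis by (simp add: 0 Zrate_def up_rate_def down_rate_def)
next
  case (Suc m)
  have "(\<integral>\<^sup>+ z. ennreal (Zrate d \<nu> (Some i) z) * G z \<partial>count_space (UNIV - {Some i}))
     = (\<Sum>z\<in>{None, Some (Suc i), Some m}. ennreal (Zrate d \<nu> (Some i) z) * G z)"
    by (rule nn_integral_count_space') (auto simp: Zrate_def Suc split: option.splits)
  then show ?thesis by (simp add: Suc Zrate_def up_rate_def down_rate_def add_ac)
qed

lemma exit_rate_Zrate:
  assumes "d \<ge> 1" "\<nu> \<ge> 0"
  shows "exit_rate (Zrate d \<nu>) (Some i) = 2 + \<nu> * real i"
proof -
  have "\<nu> * real i + up_rate d i + down_rate d i = 2 + \<nu> * real i"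
    using assms by (simp add: up_rate_def down_rate_def field_simps)
  moreover have "0 \<le> up_rate d i" "0 \<le> down_rate d i"
    using assms by (simp_all add: up_rate_def down_rate_def)
  ultimately show ?thesis
    using nn_integral_Zrate[where G="\<lambda>_. 1"] assms unfolding exit_rate_def
    by (simp add: ennreal_plus[symmetric] del: ennreal_plus)
qed

lemma exit_rate_Zrate_pos:
  assumes "d \<ge> 1" "\<nu> \<ge> 0"
  shows "exit_rate (Zrate d \<nu>) (Some i) > 0"
  using assms by (simp add: exit_rate_Zrate add_pos_nonneg)

lemma exit_rate_Zrate_None: "exit_rate (Zrate d \<nu>) None = 0"
  by (simp add: exit_rate_def Zrate_def)

lemma occupation_Zrate_None: "occupation (Zrate d \<nu>) None (Some 0) = 0"
proof -
  have "P_iter (Zrate d \<nu>) n t None (Some 0) = 0" for n t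
    by (cases n) (simp_all add: Zrate_def)
  then show ?thesis
    by (simp add: occupation_def P_min_def)
qed

text \<open>The factor 2 + \<nu> i is the exit rate of i; the jump to the cemetery contributes nothing
  because the cemetery never reaches 0.\<close>
definition Zstep :: "nat \<Rightarrow> real \<Rightarrow> (nat \<Rightarrow> real) \<Rightarrow> nat \<Rightarrow> real" where
  "Zstep d \<nu> g i = (of_bool (i = 0) + up_rate d i * g (Suc i) + down_rate d i * g (i - 1)) / (2 + \<nu> * real i)"

lemma first_jump_Zrate:
  assumes "d \<ge> 1" "\<nu> \<ge> 0" "\<And>j. 0 \<le> g j"
  shows "first_jump (Zrate d \<nu>) (Some 0) (case_option 0 (\<lambda>j. ennreal (g j))) (Some i) = ennreal (Zstep d \<nu> g i)"
proof -
  have nonneg: "0 \<le> up_rate d i * g (Suc i)" "0 \<le> down_rate d i * g (i - 1)"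
    using assms by (simp_all add: up_rate_def down_rate_def)
  then have "0 \<le> of_bool (i = 0) + up_rate d i * g (Suc i) + down_rate d i * g (i - 1)"
    by (intro add_nonneg_nonneg) auto
  then have "ennreal (Zstep d \<nu> g i)
      = ennreal (1 / (2 + \<nu> * real i)) * ennreal (of_bool (i = 0) + up_rate d i * g (Suc i) + down_rate d i * g (i - 1))"
    unfolding Zstep_def using assms(2) by (subst ennreal_mult[symmetric]) simp_all
  also have "ennreal (of_bool (i = 0) + up_rate d i * g (Suc i) + down_rate d i * g (i - 1))
      = of_bool (i = 0) + ennreal (up_rate d i) * ennreal (g (Suc i)) + ennreal (down_rate d i) * ennreal (g (i - 1))"
    using assms nonneg by (simp add: ennreal_mult' up_rate_def down_rate_def)
  finally show ?thesis
    unfolding first_jump_def nn_integral_Zrate exit_rate_Zrate[OF assms(1,2)] by (simp add: add.assoc)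
qed

lemma occupation_Zrate_eq_R_dnu:
  "(\<lambda>x. occupation (Zrate d \<nu>) x (Some 0)) = case_option 0 (R_dnu d \<nu>)"
  by (rule ext, simp add: R_dnu_def occupation_Zrate_None split: option.split)

lemma R_dnu_first_jump:
  assumes "d \<ge> 1" "\<nu> \<ge> 0"
  shows "R_dnu d \<nu> i = first_jump (Zrate d \<nu>) (Some 0) (case_option 0 (R_dnu d \<nu>)) (Some i)"
  using occupation_first_jump[of "Zrate d \<nu>" "Some i" "Some 0"] assms
  by (simp add: exit_rate_Zrate_pos occupation_Zrate_eq_R_dnu R_dnu_def[symmetric])

lemma R_dnu_le_supersolution:
  assumes "d \<ge> 1" "\<nu> \<ge> 0" "\<And>j. 0 \<le> h j" "\<And>j. Zstep d \<nu> h j \<le> h j"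
  shows "R_dnu d \<nu> i \<le> ennreal (h i)"
proof -
  have "occupation (Zrate d \<nu>) x (Some 0) \<le> case_option 0 (\<lambda>j. ennreal (h j)) x" for x
  proof (rule occupation_le_supersolution)
    fix x :: "nat option"
    assume "exit_rate (Zrate d \<nu>) x > 0"
    then obtain j where "x = Some j"
      by (cases x) (simp_all add: exit_rate_Zrate_None)
    then show "first_jump (Zrate d \<nu>) (Some 0) (case_option 0 (\<lambda>j. ennreal (h j))) x
        \<le> case_option 0 (\<lambda>j. ennreal (h j)) x"
      using assms by (simp add: first_jump_Zrate)
  next
    fix x :: "nat option"
    assume "exit_rate (Zrate d \<nu>) x = 0"
    then have "x = None"
      using exit_rate_Zrate_pos[OF assms(1,2)] by (metis less_irrefl option.exhaust)
    then show "occupation (Zrate d \<nu>) x (Some 0) \<le> case_option 0 (\<lambda>j. ennreal (h j)) x"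
      by (simp add: occupation_Zrate_None)
  qed
  from this[of "Some i"] show ?thesis
    by (simp add: R_dnu_def)
qed

lemma R_dnu_real_supersolution:
  assumes "d \<ge> 1" "\<nu> \<ge> 0" "\<And>i. R_dnu d \<nu> i < top"
  obtains F where "R_dnu d \<nu> = (\<lambda>i. ennreal (F i))" "\<And>i. 0 \<le> F i" "\<And>i. Zstep d \<nu> F i \<le> F i"
proof
  define F where "F i = enn2real (R_dnu d \<nu> i)" for i
  show R_eq_F: "R_dnu d \<nu> = (\<lambda>i. ennreal (F i))"
    using assms(3) by (intro ext) (simp add: F_def less_top)
  show F_nonneg: "0 \<le> F i" for i
    by (simp add: F_def)
  have "ennreal (Zstep d \<nu> F i) = ennreal (F i)" for i
    using R_dnu_first_jump[OF assms(1,2), of i] first_jump_Zrate[where g = F, OF assms(1,2) F_nonneg]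
    by (simp add: R_eq_F)
  then show "Zstep d \<nu> F i \<le> F i" for i
    using F_nonneg[of i] by (metis ennreal_le_iff order_refl)
qed

lemma incseq_if_second_difference:
  fixes e :: "nat \<Rightarrow> real" and D :: real
  assumes "D > 1" "e 0 \<le> e 1" "\<And>i. D * e (Suc i) \<le> (D - 1) * e (Suc (Suc i)) + e i"
  shows "incseq e"
proof (rule incseq_SucI)
  fix i
  show "e i \<le> e (Suc i)"
  proof (induction i)
    case 0
    show ?case using assms(2) by simp
  next
    case (Suc i)
    have "(D - 1) * e (Suc i) \<le> (D - 1) * e (Suc (Suc i))"
      using assms(3)[of i] Suc.IH by (simp add: algebra_simps)
    then show ?case using assms(1) by simp
  qed
qed

text \<open>Maximum principle: \<open>H - F\<close> is a nonnegative subsolution of the homogeneous system, hence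
  nondecreasing; being dominated by \<open>H\<close>, which tends to 0, it vanishes.\<close>
lemma Zstep_supersolution_eq:
  assumes d: "d \<ge> 2" and \<nu>: "\<nu> \<ge> 0"
    and F_super: "\<And>i. Zstep d \<nu> F i \<le> F i" and F_nonneg: "\<And>i. 0 \<le> F i" and F_le: "\<And>i. F i \<le> H i"
    and H_fix: "\<And>i. Zstep d \<nu> H i = H i" and H_lim: "H \<longlonglongrightarrow> 0"
  shows "F i = H i"
proof -
  define e where "e i = H i - F i" for i
  have e_nonneg: "0 \<le> e i" for i
    using F_le[of i] by (simp add: e_def)
  have e_sub: "(2 + \<nu> * real i) * e i \<le> up_rate d i * e (Suc i) + down_rate d i * e (i - 1)" for i
  proof -
    have "e i \<le> Zstep d \<nu> H i - Zstep d \<nu> F i"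
      using H_fix[of i] F_super[of i] by (simp add: e_def)
    also have "\<dots> = (up_rate d i * e (Suc i) + down_rate d i * e (i - 1)) / (2 + \<nu> * real i)"
      unfolding Zstep_def e_def by (simp add: diff_divide_distrib[symmetric] algebra_simps)
    finally show ?thesis
      using \<nu> by (simp add: le_divide_eq add_pos_nonneg mult.commute)
  qed
  have "incseq e"
  proof (rule incseq_if_second_difference)
    show "real d > 1" using d by simp
    show "e 0 \<le> e 1" using e_sub[of 0] by (simp add: up_rate_def down_rate_def)
    show "real d * e (Suc i) \<le> (real d - 1) * e (Suc (Suc i)) + e i" for i
    proof -
      have "2 * e (Suc i) \<le> (2 + \<nu> * real (Suc i)) * e (Suc i)"
        using \<nu> e_nonneg[of "Suc i"] by (intro mult_right_mono) auto
      with e_sub[of "Suc i"] have "2 * e (Suc i) \<le> (2 * (real d - 1) * e (Suc (Suc i)) + 2 * e i) / real d"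
        by (simp add: up_rate_def down_rate_def add_divide_distrib)
      then show ?thesis using d by (simp add: field_simps)
    qed
  qed
  have "e i \<le> 0"
  proof (rule LIMSEQ_le_const[OF H_lim])
    have "e i \<le> H j" if "i \<le> j" for j
      using incseqD[OF \<open>incseq e\<close> that] F_nonneg[of j] by (simp add: e_def)
    then show "\<exists>N. \<forall>j\<ge>N. e i \<le> H j"
      by blast
  qed
  then show ?thesis using F_le[of i] by (simp add: e_def)
qed

section \<open>Tails of the continued fraction and the explicit solution\<close>

definition cf_tail :: "(nat \<Rightarrow> real) \<Rightarrow> nat \<Rightarrow> real" where
  "cf_tail a k = lim (\<lambda>n. cf_trunc a k n)"

context
  fixes a :: "nat \<Rightarrow> real" and B :: real
  assumes B_pos: "B > 0" and a_ge: "\<And>k. a k \<ge> B + 1 / B"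
begin

lemma cf_trunc_incseq_bounded:
  "0 \<le> cf_trunc a k n \<and> cf_trunc a k n \<le> cf_trunc a k (Suc n) \<and> cf_trunc a k (Suc n) \<le> 1 / B"
proof (induction n arbitrary: k)
  case 0
  have "0 < 1 / B" using B_pos by simp
  then have "a k \<ge> B" using a_ge[of k] by linarith
  then show ?case using B_pos by (simp add: frac_le)
next
  case (Suc n)
  let ?x = "cf_trunc a (Suc k) n" and ?y = "cf_trunc a (Suc k) (Suc n)"
  from Suc.IH[of "Suc k"] have "0 \<le> ?x" "?x \<le> ?y" "?y \<le> 1 / B" by auto
  then have "B \<le> a k - ?y" "a k - ?y \<le> a k - ?x" using a_ge[of k] by linarith+
  then show ?case using B_pos by (simp add: frac_le)
qed

lemma cf_trunc_LIMSEQ: "(\<lambda>n. cf_trunc a k n) \<longlonglongrightarrow> cf_tail a k"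
proof -
  have "incseq (\<lambda>n. cf_trunc a k n)"
    using cf_trunc_incseq_bounded by (simp add: incseq_SucI)
  moreover have "cf_trunc a k n \<le> 1 / B" for n
    using cf_trunc_incseq_bounded[of k n] by linarith
  ultimately have "convergent (\<lambda>n. cf_trunc a k n)"
    by (metis incseq_convergent convergentI)
  then show ?thesis
    unfolding cf_tail_def by (simp add: convergent_LIMSEQ_iff)
qed

lemma cf_tail_le: "cf_tail a k \<le> 1 / B"
  using cf_trunc_incseq_bounded by (intro LIMSEQ_le_const2[OF cf_trunc_LIMSEQ]) (meson order_trans)

lemma cf_tail_eq: "cf_tail a k = 1 / (a k - cf_tail a (Suc k))"
proof -
  have "a k - cf_tail a (Suc k) \<ge> B"
    using a_ge[of k] cf_tail_le[of "Suc k"] by linarith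
  then have "(\<lambda>n. cf_trunc a k (Suc n)) \<longlonglongrightarrow> 1 / (a k - cf_tail a (Suc k))"
    unfolding cf_trunc.simps using B_pos
    by (intro tendsto_divide tendsto_const tendsto_diff cf_trunc_LIMSEQ) auto
  moreover have "(\<lambda>n. cf_trunc a k (Suc n)) \<longlonglongrightarrow> cf_tail a k"
    using cf_trunc_LIMSEQ by (rule LIMSEQ_Suc)
  ultimately show ?thesis
    using LIMSEQ_unique by blast
qed

lemma cf_tail_pos: "cf_tail a k > 0"
proof -
  have "a k - cf_tail a (Suc k) \<ge> B"
    using a_ge[of k] cf_tail_le[of "Suc k"] by linarith
  then show ?thesis
    using B_pos by (subst cf_tail_eq) simp
qed

end

definition Zcoeff :: "nat \<Rightarrow> real \<Rightarrow> nat \<Rightarrow> real" where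
  "Zcoeff d \<nu> k = (2 + real k * \<nu>) / rho_d d"

lemma Delta_eq_cf_tail: "Delta d \<nu> = cf_tail (Zcoeff d \<nu>) 1"
  unfolding Delta_def cf_tail_def Zcoeff_def ..

lemma beta_d_gt_1: "d \<ge> 3 \<Longrightarrow> beta_d d > 1"
  by (simp add: beta_d_def)

lemma Zcoeff_ge:
  assumes "d \<ge> 3" "\<nu> \<ge> 0"
  shows "Zcoeff d \<nu> k \<ge> beta_d d + 1 / beta_d d"
proof -
  define B where "B = beta_d d"
  have "B > 1" using beta_d_gt_1[OF assms(1)] by (simp add: B_def)
  have d_eq: "real d = B\<^sup>2 + 1" using assms(1) by (simp add: B_def beta_d_def)
  have "Zcoeff d \<nu> k = (2 + real k * \<nu>) * real d / (2 * B)"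
    by (simp add: Zcoeff_def rho_d_def B_def beta_d_def)
  also have "\<dots> \<ge> 2 * real d / (2 * B)"
    using \<open>B > 1\<close> assms by (intro divide_right_mono mult_right_mono) auto
  also have "2 * real d / (2 * B) = B + 1 / B"
    unfolding d_eq using \<open>B > 1\<close> by (simp add: field_simps power2_eq_square)
  finally show ?thesis by (simp add: B_def)
qed

definition R_formula :: "nat \<Rightarrow> real \<Rightarrow> nat \<Rightarrow> real" where
  "R_formula d \<nu> i = 1 / (2 * vartheta d \<nu>) * (\<Prod>k\<in>{1..i}. cf_tail (Zcoeff d \<nu>) k / beta_d d)"

context
  fixes d :: nat and \<nu> :: real
  assumes d: "d \<ge> 3" and \<nu>: "\<nu> \<ge> 0"
begin

private abbreviation "r \<equiv> cf_tail (Zcoeff d \<nu>)"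
private abbreviation "B \<equiv> beta_d d"

private lemma B_gt_1: "B > 1"
  using d by (rule beta_d_gt_1)

private lemma r_pos: "r k > 0"
  using B_gt_1 Zcoeff_ge[OF d \<nu>] by (intro cf_tail_pos) auto

private lemma r_le: "r k \<le> 1 / B"
  using B_gt_1 Zcoeff_ge[OF d \<nu>] by (intro cf_tail_le) auto

private lemma r_eq: "r k = 1 / (Zcoeff d \<nu> k - r (Suc k))"
  using B_gt_1 Zcoeff_ge[OF d \<nu>] by (intro cf_tail_eq) auto

lemma vartheta_pos: "vartheta d \<nu> > 0"
proof -
  have "r 1 \<le> 1 / B" by (rule r_le)
  also have "\<dots> < 1" using B_gt_1 by simp
  also have "\<dots> < B" by (rule B_gt_1)
  finally show ?thesis
    using B_gt_1 by (simp add: vartheta_def Delta_eq_cf_tail)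
qed

lemma R_formula_nonneg: "0 \<le> R_formula d \<nu> i"
  unfolding R_formula_def using vartheta_pos r_pos B_gt_1
  by (intro mult_nonneg_nonneg prod_nonneg divide_nonneg_nonneg) (auto intro: less_imp_le)

lemma R_formula_LIMSEQ_0: "R_formula d \<nu> \<longlonglongrightarrow> 0"
proof -
  define C where "C = 1 / (2 * vartheta d \<nu>)"
  have bound: "R_formula d \<nu> i \<le> C * (1 / B\<^sup>2) ^ i" for i
  proof -
    have "r k / B \<le> 1 / B\<^sup>2" for k
      using divide_right_mono[OF r_le, of B] B_gt_1 by (simp add: power2_eq_square)
    then have "(\<Prod>k\<in>{1..i}. r k / B) \<le> (\<Prod>k\<in>{1..i}. 1 / B\<^sup>2)"
      using r_pos B_gt_1 by (intro prod_mono) (auto intro: less_imp_le)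
    then show ?thesis
      unfolding R_formula_def C_def using vartheta_pos by (intro mult_left_mono) auto
  qed
  have "1 < B\<^sup>2"
    using B_gt_1 by simp
  then have lim: "(\<lambda>i. C * (1 / B\<^sup>2) ^ i) \<longlonglongrightarrow> 0"
    by (intro tendsto_mult_right_zero LIMSEQ_power_zero) (simp add: divide_less_eq_1)
  show ?thesis
  proof (rule tendsto_sandwich[OF _ _ tendsto_const lim])
    show "\<forall>\<^sub>F i in sequentially. 0 \<le> R_formula d \<nu> i"
      using R_formula_nonneg by simp
    show "\<forall>\<^sub>F i in sequentially. R_formula d \<nu> i \<le> C * (1 / B\<^sup>2) ^ i"
      using bound by simp
  qed
qed

lemma R_formula_Suc: "R_formula d \<nu> (Suc k) = R_formula d \<nu> k * (r (Suc k) / B)"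
  unfolding R_formula_def by (simp add: prod.nat_ivl_Suc' mult_ac)

lemma Zstep_R_formula: "Zstep d \<nu> (R_formula d \<nu>) i = R_formula d \<nu> i"
proof (cases i)
  case 0
  have "vartheta d \<nu> * (2 * R_formula d \<nu> 0) = 1"
    using vartheta_pos by (simp add: R_formula_def)
  then have "1 / 2 + R_formula d \<nu> 0 * (r 1 / B) = R_formula d \<nu> 0"
    by (simp add: vartheta_def Delta_eq_cf_tail algebra_simps)
  then show ?thesis
    using R_formula_Suc[of 0] by (simp add: 0 Zstep_def up_rate_def down_rate_def)
next
  case (Suc m)
  define q where "q = 2 + \<nu> * real i"
  define P where "P = R_formula d \<nu> m"
  have "q > 0" using \<nu> by (simp add: q_def add_pos_nonneg)
  have d_eq: "real d = B\<^sup>2 + 1"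
    using d by (simp add: beta_d_def)
  have "Zcoeff d \<nu> i - r (Suc i) \<noteq> 0"
    using r_pos[of i] r_eq[of i] by auto
  then have "r i * Zcoeff d \<nu> i = 1 + r i * r (Suc i)"
    using r_eq[of i] by (simp add: field_simps)
  moreover have "Zcoeff d \<nu> i = q * real d / (2 * B)"
    by (simp add: Zcoeff_def rho_d_def q_def beta_d_def mult.commute)
  ultimately have key: "q * (r i / B) = 2 / real d * (r i * r (Suc i) + 1)"
    using B_gt_1 d by (simp add: field_simps)
  have "Zstep d \<nu> (R_formula d \<nu>) i
      = (2 * B\<^sup>2 / real d * (P * (r i / B) * (r (Suc i) / B)) + 2 / real d * P) / q"
    unfolding Zstep_def q_def P_def Suc R_formula_Suc
    by (simp add: up_rate_def down_rate_def d_eq)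
  also have "\<dots> = P * (q * (r i / B)) / q"
    unfolding key using B_gt_1 d \<open>q > 0\<close> by (simp add: field_simps power2_eq_square)
  also have "\<dots> = R_formula d \<nu> i"
    using \<open>q > 0\<close> by (simp add: P_def Suc R_formula_Suc)
  finally show ?thesis .
qed

end

theorem proposition4p1:
  fixes d :: nat and \<nu> :: real
  assumes "d \<ge> 3" and "\<nu> > 0"
  shows "R_dnu d \<nu> 0 = ennreal (1 / (2 * vartheta d \<nu>))"
proof -
  have d: "d \<ge> 1" "d \<ge> 2" and \<nu>: "\<nu> \<ge> 0"
    using assms by auto
  note R_formula = R_formula_nonneg[OF assms(1) \<nu>] Zstep_R_formula[OF assms(1) \<nu>]
    R_formula_LIMSEQ_0[OF assms(1) \<nu>]
  have R_le: "R_dnu d \<nu> i \<le> ennreal (R_formula d \<nu> i)" for i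
    by (rule R_dnu_le_supersolution[where h = "R_formula d \<nu>", OF d(1) \<nu> R_formula(1) eq_refl[OF R_formula(2)]])
  then have "R_dnu d \<nu> i < top" for i
    by (rule le_less_trans) simp
  then obtain F where R_eq_F: "R_dnu d \<nu> = (\<lambda>i. ennreal (F i))"
    and F_nonneg: "\<And>i. 0 \<le> F i" and F_super: "\<And>i. Zstep d \<nu> F i \<le> F i"
    using R_dnu_real_supersolution[OF d(1) \<nu>] by blast
  have F_le: "F i \<le> R_formula d \<nu> i" for i
    using R_le[of i] R_formula(1)[of i] by (simp add: R_eq_F)
  have "F 0 = R_formula d \<nu> 0"
    using F_super F_nonneg F_le R_formula(2,3) by (rule Zstep_supersolution_eq[OF d(2) \<nu>])
  then show ?thesis
    by (simp add: R_eq_F R_formula_def)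
qed

end
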